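(* For any causal encoding policy $\mathbb{P}_E$ and any $K\in\mathbb{N}_{+}$, with $\hat x(k)=\mathbb{E}[x(k)\mid a(0:k)]$, $$\frac1{K\tau}\sum_{k=0}^{K-1}\mathbb{E}[\ell(a(k))]\ \ge\ \frac1\tau\,\theta^{-1}\Big(\frac1K I\big(x(0:K-1);\hat x(0:K-1)\big)\Big).$$ Here $I$ denotes mutual information in bits.
   Context: Standing assumptions: $A\in\mathbb{R}^{n\times n}$ is Hurwitz, $BB^\top\succ0$, and $\Sigma_0\succ0$. Source: $dx_t=Ax_t\,dt+B\,dw_t$, with $x_0\sim\mathcal{N}(0,\Sigma_0)$ and $w$ a standard $n$-dimensional Brownian motion. Fix $\tau>0$ and let $x(k)=x_{k\tau}$. Encoding policies: $\{0,1\}^*$ is the set of finite binary strings, including the empty string $\emptyset$; $\ell(a)$ is the length of $a$, with $\ell(\emptyset)=0$. A causal encoding policy $\mathbb{P}_E$ is a sequence of Borel stochastic kernels $\mathbb{P}[a(k)\mid a(0:k-1),x(0:k)]$, $k\in\mathbb{N}_0$, with $a(k)\in\{0,1\}^*$. The function $\theta$: $\theta:[0,\infty)\to[0,\infty)$ is $\theta(x)=x+(1+x)\log_2(1+x)-x\log_2x$, with $0\log0=0$. It is strictly increasing and concave, with inverse $\theta^{-1}$. *)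

theory Defs
  imports "HOL-Probability.Probability"
begin

definition theta :: "real \<Rightarrow> real" where
  "theta x = x + (1 + x) * log 2 (1 + x) - (if x = 0 then 0 else x * log 2 x)"

definition theta_inv :: "real \<Rightarrow> real" where
  "theta_inv y = (THE x. 0 \<le> x \<and> theta x = y)"

definition theta_inv_ext :: "ennreal \<Rightarrow> ennreal" where
  "theta_inv_ext y = (if y = \<top> then \<top> else ennreal (theta_inv (enn2real y)))"

definition mutual_info_bits ::
  "'a measure \<Rightarrow> 'b measure \<Rightarrow> 'c measure \<Rightarrow> ('a \<Rightarrow> 'b) \<Rightarrow> ('a \<Rightarrow> 'c) \<Rightarrow> ennreal" where
  "mutual_info_bits M S T X Y =
     (let P = distr M S X \<Otimes>\<^sub>M distr M T Y;
          Q = distr M (S \<Otimes>\<^sub>M T) (\<lambda>\<omega>. (X \<omega>, Y \<omega>))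
      in if absolutely_continuous P Q \<and> integrable Q (entropy_density 2 P Q)
         then ennreal (prob_space.mutual_information M 2 S T X Y) else \<top>)"

definition indep_rv :: "'a measure \<Rightarrow> 'b measure \<Rightarrow> ('a \<Rightarrow> 'b) \<Rightarrow> 'c measure \<Rightarrow> ('a \<Rightarrow> 'c) \<Rightarrow> bool" where
  "indep_rv M S X T Y \<longleftrightarrow> X \<in> measurable M S \<and> Y \<in> measurable M T \<and>
     distr M (S \<Otimes>\<^sub>M T) (\<lambda>\<omega>. (X \<omega>, Y \<omega>)) = distr M S X \<Otimes>\<^sub>M distr M T Y"

definition pos_def_mat :: "real^'n^'n \<Rightarrow> bool" where
  "pos_def_mat S \<longleftrightarrow> (\<forall>v. v \<noteq> 0 \<longrightarrow> v \<bullet> (S *v v) > 0)"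

definition hurwitz :: "real^'n^'n \<Rightarrow> bool" where
  "hurwitz A \<longleftrightarrow> (\<forall>(lam::complex) (v::complex^'n). v \<noteq> 0 \<and>
      (\<chi> i. \<Sum>j\<in>UNIV. complex_of_real (A$i$j) * v$j) = (\<chi> i. lam * v$i) \<longrightarrow> Re lam < 0)"

(* Y ~ N(0, S) (S positive definite): every nonzero linear functional is centred normal *)
definition gaussian_vec :: "'a measure \<Rightarrow> ('a \<Rightarrow> real^'n) \<Rightarrow> real^'n^'n \<Rightarrow> bool" where
  "gaussian_vec M Y S \<longleftrightarrow> Y \<in> borel_measurable M \<and>
     (\<forall>v. v \<noteq> 0 \<longrightarrow> distributed M lborel (\<lambda>\<omega>. v \<bullet> Y \<omega>)
                          (\<lambda>r. ennreal (normal_density 0 (sqrt (v \<bullet> (S *v v))) r)))"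

definition std_brownian :: "'a measure \<Rightarrow> (real \<Rightarrow> 'a \<Rightarrow> real^'n) \<Rightarrow> bool" where
  "std_brownian M w \<longleftrightarrow>
     (\<forall>t. w t \<in> borel_measurable M) \<and>
     (AE \<omega> in M. w 0 \<omega> = 0 \<and> continuous_on {0..} (\<lambda>t. w t \<omega>)) \<and>
     (\<forall>s t. 0 \<le> s \<and> s < t \<longrightarrow> gaussian_vec M (\<lambda>\<omega>. w t \<omega> - w s \<omega>) ((t - s) *\<^sub>R mat 1)) \<and>
     (\<forall>(ts::nat \<Rightarrow> real) m. 0 \<le> ts 0 \<and> strict_mono ts \<longrightarrow>
        prob_space.indep_vars M (\<lambda>_. borel) (\<lambda>i \<omega>. w (ts (Suc i)) \<omega> - w (ts i) \<omega>) {..<m})"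

(* X solves dX = A X dt + B dw (pathwise integral form, B constant), X_0 ~ N(0,\<Sigma>0)
   independent of w *)
definition lti_source ::
  "'a measure \<Rightarrow> real^'n^'n \<Rightarrow> real^'n^'n \<Rightarrow> real^'n^'n \<Rightarrow> (real \<Rightarrow> 'a \<Rightarrow> real^'n)
     \<Rightarrow> (real \<Rightarrow> 'a \<Rightarrow> real^'n) \<Rightarrow> bool" where
  "lti_source M A B Sigma0 w X \<longleftrightarrow>
     std_brownian M w \<and>
     gaussian_vec M (X 0) Sigma0 \<and>
     indep_rv M borel (X 0) (Pi\<^sub>M UNIV (\<lambda>_::real. borel)) (\<lambda>\<omega> t. w t \<omega>) \<and>
     (\<forall>t. X t \<in> borel_measurable M) \<and>
     (AE \<omega> in M. continuous_on {0..} (\<lambda>t. X t \<omega>) \<and>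
        (\<forall>t\<ge>0. X t \<omega> = X 0 \<omega> + integral {0..t} (\<lambda>s. A *v X s \<omega>) + B *v w t \<omega>))"

(* causal (randomised) encoding policy: a(k) is drawn from a Borel kernel given
   (a(0:k-1), x(0:k)), realised with fresh independent randomness u(k) *)
definition causal_encoding ::
  "'a measure \<Rightarrow> real \<Rightarrow> (real \<Rightarrow> 'a \<Rightarrow> real^'n) \<Rightarrow> (nat \<Rightarrow> 'a \<Rightarrow> bool list) \<Rightarrow> bool" where
  "causal_encoding M tau X a \<longleftrightarrow>
     (\<forall>k. a k \<in> measurable M (count_space UNIV)) \<and>
     (\<exists>(u :: nat \<Rightarrow> 'a \<Rightarrow> real)
        (enc :: nat \<Rightarrow> bool list list \<times> (nat \<Rightarrow> real^'n) \<times> real \<Rightarrow> bool list).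
        (\<forall>k. u k \<in> borel_measurable M) \<and>
        prob_space.indep_vars M (\<lambda>_. borel) u UNIV \<and>
        indep_rv M (Pi\<^sub>M UNIV (\<lambda>_::nat. borel)) (\<lambda>\<omega> k. u k \<omega>)
                  (Pi\<^sub>M UNIV (\<lambda>_::real. borel)) (\<lambda>\<omega> t. X t \<omega>) \<and>
        (\<forall>k. enc k \<in> measurable (count_space UNIV \<Otimes>\<^sub>M (Pi\<^sub>M {..k} (\<lambda>_. borel) \<Otimes>\<^sub>M borel))
                                  (count_space UNIV)) \<and>
        (AE \<omega> in M. \<forall>k. a k \<omega> =
           enc k (map (\<lambda>i. a i \<omega>) [0..<k], (\<lambda>i\<in>{..k}. X (real i * tau) \<omega>), u k \<omega>)))"

definition xhat ::
  "'a measure \<Rightarrow> real \<Rightarrow> (real \<Rightarrow> 'a \<Rightarrow> real^'n) \<Rightarrow> (nat \<Rightarrow> 'a \<Rightarrow> bool list) \<Rightarrow> nat \<Rightarrow> 'a \<Rightarrow> real^'n" where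
  "xhat M tau X a k \<omega> =
     (\<chi> i. real_cond_exp M
             (vimage_algebra (space M) (\<lambda>\<omega>'. map (\<lambda>j. a j \<omega>') [0..<Suc k]) (count_space UNIV))
             (\<lambda>\<omega>'. X (real k * tau) \<omega>' $ i) \<omega>)"

end

(*
  The estimate xhat(0:K-1) is a function of the codeword sequence Z = a(0:K-1), which takes
  countably many values. For a random variable Y with countably many values, the joint law of
  (X, Y) has density at most 1 / P(Y = y) with respect to the product of the marginals on the
  slice {Y = y}, so I(X; Y) <= E_w[-log2 P(Y = Y w)] <= E_w[-log2 P(Z = Z w)]. By Gibbs' inequality this
  is at most E[-log2 r(Z)] for every pmf r. For r the K-fold product of "geometric length with
  mean x, then uniform bits", -log2 r(Z) = K log2 (1 + x) + (1 + log2 ((1 + x) / x)) * sum_k l(a(k)),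
  whose expectation is at most K theta(x) as soon as E[sum_k l(a(k))] <= K x; inverting theta
  gives the claim.
*)

theory Submission
  imports Defs "HOL-Real_Asymp.Real_Asymp"
begin

lemma theta_ge_self:
  assumes "0 \<le> x"
  shows "x \<le> theta x"
proof (cases "x = 0")
  case False
  with assms have "x * log 2 x \<le> x * log 2 (1 + x)"
    by (intro mult_left_mono) auto
  also have "\<dots> \<le> (1 + x) * log 2 (1 + x)"
    using assms by (intro mult_right_mono) auto
  finally show ?thesis
    by (simp add: theta_def)
qed (simp add: theta_def)

lemma theta_altdef: "0 < x \<Longrightarrow> theta x = log 2 (1 + x) + x * (1 + log 2 ((1 + x) / x))"
  by (simp add: theta_def log_divide algebra_simps)

lemma theta_has_real_derivative:
  assumes "0 < x"
  shows "(theta has_real_derivative 1 + log 2 ((1 + x) / x)) (at x)"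
proof (rule has_field_derivative_transform_within_open)
  have deriv: "((\<lambda>y. y + (1 + y) * log 2 (1 + y) - y * log 2 y) has_real_derivative
      1 + (log 2 (1 + x) + (1 + x) / (ln 2 * (1 + x))) - (log 2 x + x / (ln 2 * x))) (at x)"
    using assms by (auto intro!: derivative_eq_intros)
  have deriv_eq: "1 + (log 2 (1 + x) + (1 + x) / (ln 2 * (1 + x))) - (log 2 x + x / (ln 2 * x))
      = 1 + log 2 ((1 + x) / x)"
    using assms by (simp add: log_divide)
  show "((\<lambda>y. y + (1 + y) * log 2 (1 + y) - y * log 2 y) has_real_derivative
      1 + log 2 ((1 + x) / x)) (at x)"
    using deriv unfolding deriv_eq .
  show "\<And>y. y \<in> {0<..} \<Longrightarrow> y + (1 + y) * log 2 (1 + y) - y * log 2 y = theta y"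
    by (simp add: theta_def)
qed (use assms in auto)

lemma theta_strict_mono: "strict_mono_on {0..} theta"
proof (rule strict_mono_onI)
  fix a b :: real
  assume "a \<in> {0..}" "a < b"
  show "theta a < theta b"
  proof (cases "a = 0")
    case True
    then show ?thesis using theta_ge_self[of b] \<open>a < b\<close> by (simp add: theta_def)
  next
    case False
    with \<open>a \<in> {0..}\<close> have "0 < a" by simp
    show ?thesis
    proof (rule DERIV_pos_imp_increasing[OF \<open>a < b\<close>])
      fix y assume "a \<le> y"
      with \<open>0 < a\<close> have "0 < y" by simp
      then have "0 < log 2 ((1 + y) / y)" by (subst zero_less_log_cancel_iff) auto
      with theta_has_real_derivative[OF \<open>0 < y\<close>]
      show "\<exists>d. (theta has_real_derivative d) (at y) \<and> 0 < d"
        by (intro exI[of _ "1 + log 2 ((1 + y) / y)"]) auto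
    qed
  qed
qed

lemma continuous_on_theta: "continuous_on {0..} theta"
proof -
  have "continuous (at x within {0..}) (\<lambda>x. x * log 2 x)" if "x \<in> {0..}" for x :: real
  proof (cases "x = 0")
    case True
    have "((\<lambda>x::real. x * log 2 x) \<longlongrightarrow> 0) (at_right 0)"
      unfolding log_def by real_asymp
    with True show ?thesis
      by (simp add: continuous_within at_within_Ici_at_right)
  next
    case False
    with that have "0 < x" by simp
    then have "continuous (at x) (\<lambda>x. x * log 2 x)"
      by (intro continuous_intros) auto
    then show ?thesis
      by (rule continuous_at_imp_continuous_within)
  qed
  then have "continuous_on {0..} (\<lambda>x::real. x * log 2 x)"
    by (simp add: continuous_on_eq_continuous_within)
  moreover have "continuous_on {0..} (\<lambda>x::real. x + (1 + x) * log 2 (1 + x))"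
    by (intro continuous_intros) auto
  ultimately have "continuous_on {0..} (\<lambda>x. x + (1 + x) * log 2 (1 + x) - x * log 2 x)"
    by (rule continuous_on_diff[rotated])
  moreover have "x + (1 + x) * log 2 (1 + x) - x * log 2 x = theta x" for x
    by (simp add: theta_def)
  ultimately show ?thesis
    by simp
qed

lemma theta_inv_le:
  assumes "0 \<le> y" "0 \<le> x" "y \<le> theta x"
  shows "theta_inv y \<le> x"
proof -
  have "continuous_on {0..x} theta"
    using continuous_on_theta by (rule continuous_on_subset) auto
  then obtain t where t: "0 \<le> t" "t \<le> x" "theta t = y"
    using IVT'[of theta 0 y x] assms by (auto simp: theta_def)
  have "theta_inv y = t"
    unfolding theta_inv_def
  proof (rule the_equality)
    fix s assume "0 \<le> s \<and> theta s = y"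
    with t show "s = t"
      using strict_mono_on_eqD[OF theta_strict_mono, of t s] by simp
  qed (use t in simp)
  with t show ?thesis by simp
qed

lemma theta_inv_ext_le:
  assumes "0 \<le> x\<^sub>0" and le: "\<And>x. x\<^sub>0 < x \<Longrightarrow> J \<le> ennreal (theta x)"
  shows "theta_inv_ext J \<le> ennreal x\<^sub>0"
proof -
  obtain j where j: "J = ennreal j" "0 \<le> j"
    using le[of "x\<^sub>0 + 1"] by (cases J) (auto simp: top_unique)
  have "theta_inv j \<le> x\<^sub>0"
  proof (rule field_le_epsilon)
    fix e :: real assume "0 < e"
    then have "j \<le> theta (x\<^sub>0 + e)"
      using le[of "x\<^sub>0 + e"] j theta_ge_self[of "x\<^sub>0 + e"] \<open>0 \<le> x\<^sub>0\<close> by simp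
    then show "theta_inv j \<le> x\<^sub>0 + e"
      using \<open>0 < e\<close> \<open>0 \<le> x\<^sub>0\<close> j by (intro theta_inv_le) auto
  qed
  then show ?thesis using j by (simp add: theta_inv_ext_def ennreal_leI)
qed

lemma theta_inv_ext_div_le:
  fixes I L :: ennreal and K :: nat and tau :: real
  assumes "1 \<le> K" "0 < tau"
    and bound: "\<And>x::real. 0 < x \<Longrightarrow> L \<le> ennreal (K * x) \<Longrightarrow> I \<le> ennreal (K * theta x)"
  shows "theta_inv_ext (I / of_nat K) / ennreal tau \<le> L / ennreal (K * tau)"
proof (cases "L = \<top>")
  case False
  then obtain l where l: "L = ennreal l" "0 \<le> l"
    by (cases L) auto
  have "theta_inv_ext (I / of_nat K) \<le> ennreal (l / K)"
  proof (rule theta_inv_ext_le)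
    fix x assume "l / K < x"
    moreover have "0 \<le> l / K"
      using l(2) by simp
    ultimately have "0 < x"
      by linarith
    moreover have "l \<le> K * x"
      using \<open>l / K < x\<close> assms(1) by (simp add: field_simps)
    then have "L \<le> ennreal (K * x)"
      by (simp add: l(1) ennreal_leI)
    ultimately have "I \<le> ennreal (K * theta x)"
      by (rule bound)
    then have "I / of_nat K \<le> ennreal (K * theta x) / ennreal K"
      by (simp add: divide_right_mono_ennreal ennreal_of_nat_eq_real_of_nat)
    then show "I / of_nat K \<le> ennreal (theta x)"
      using assms(1) theta_ge_self[of x] \<open>0 < x\<close> by (simp add: divide_ennreal)
  qed (simp add: l)
  then have "theta_inv_ext (I / of_nat K) / ennreal tau \<le> ennreal (l / K) / ennreal tau"
    by (rule divide_right_mono_ennreal)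
  also have "\<dots> = L / ennreal (K * tau)"
    using l assms(1,2) by (simp add: divide_ennreal)
  finally show ?thesis .
next
  case True
  then have "L / ennreal (K * tau) = \<top>"
    by (simp add: ennreal_top_divide)
  then show ?thesis
    by simp
qed

(* Its code length -log2 is affine in the length of the string and equals theta x at length x;
   this is how theta enters the bound. *)
definition geometric_bits_pmf :: "real \<Rightarrow> bool list pmf" where
  "geometric_bits_pmf x = geometric_pmf (1 / (1 + x)) \<bind> (\<lambda>n. pmf_of_set {xs. length xs = n})"

lemma pmf_geometric_bits_pmf:
  assumes "0 < x"
  shows "pmf (geometric_bits_pmf x) xs = 1 / (1 + x) * (x / (1 + x)) ^ length xs / 2 ^ length xs"
proof -
  have strings: "finite {xs :: bool list. length xs = n}" "{xs :: bool list. length xs = n} \<noteq> {}"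
      "card {xs :: bool list. length xs = n} = 2 ^ n" for n
    using finite_lists_length_eq[of "UNIV :: bool set" n] card_lists_length_eq[of "UNIV :: bool set" n]
    by (auto intro!: exI[of _ "replicate n True"])
  have "pmf (geometric_bits_pmf x) xs
      = (\<integral>n. 1 / 2 ^ length xs * indicator {length xs} n \<partial>geometric_pmf (1 / (1 + x)))"
    unfolding geometric_bits_pmf_def pmf_bind
    by (intro Bochner_Integration.integral_cong)
      (auto simp: pmf_of_set[OF strings(2,1)] strings(3) split: split_indicator)
  also have "\<dots> = 1 / 2 ^ length xs * pmf (geometric_pmf (1 / (1 + x))) (length xs)"
    by (simp add: measure_pmf_single)
  also have "1 - 1 / (1 + x) = x / (1 + x)"
    using assms by (simp add: field_simps)
  then have "pmf (geometric_pmf (1 / (1 + x))) (length xs) = 1 / (1 + x) * (x / (1 + x)) ^ length xs"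
    using assms by simp
  finally show ?thesis by simp
qed

lemma neg_log_pmf_geometric_bits_pmf:
  assumes "0 < x"
  shows "- log 2 (pmf (geometric_bits_pmf x) xs) = log 2 (1 + x) + length xs * (1 + log 2 ((1 + x) / x))"
proof -
  have "- log 2 (pmf (geometric_bits_pmf x) xs)
      = - (log 2 (1 / (1 + x)) + length xs * log 2 (x / (1 + x)) - length xs * log 2 2)"
    using assms by (simp add: pmf_geometric_bits_pmf log_mult log_divide log_nat_power)
  also have "\<dots> = log 2 (1 + x) + length xs * (1 + log 2 ((1 + x) / x))"
    using assms by (simp add: log_divide algebra_simps)
  finally show ?thesis .
qed

lemma pmf_replicate_pmf:
  "length xs = n \<Longrightarrow> pmf (replicate_pmf n p) xs = prod_list (map (pmf p) xs)"
proof (induction n arbitrary: xs)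
  case (Suc n)
  then obtain x ys where xs: "xs = x # ys" "length ys = n" by (cases xs) auto
  have "replicate_pmf (Suc n) p = map_pmf (\<lambda>(x, xs). x # xs) (pair_pmf p (replicate_pmf n p))"
    by (simp add: pair_pmf_def map_bind_pmf bind_return_pmf map_return_pmf)
  moreover have "inj (\<lambda>(x :: 'a, xs). x # xs)"
    by (auto simp: inj_def)
  ultimately have "pmf (replicate_pmf (Suc n) p) (x # ys) = pmf (pair_pmf p (replicate_pmf n p)) (x, ys)"
    using pmf_map_inj'[of "\<lambda>(x, xs). x # xs" _ "(x, ys)"] by simp
  then show ?case using Suc.IH xs by (simp add: pmf_pair)
qed simp

lemma prod_list_map_upt: "prod_list (map f [0..<n]) = (\<Prod>k<n. f k)"
  by (induction n) auto

lemma (in prob_space) nn_integral_neg_log_replicate_geometric_bits_le: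
  fixes a :: "nat \<Rightarrow> 'a \<Rightarrow> bool list" and x :: real
  assumes "0 < x" and [measurable]: "\<And>k. a k \<in> measurable M (count_space UNIV)"
    and length_le: "(\<Sum>k<K. \<integral>\<^sup>+\<omega>. ennreal (length (a k \<omega>)) \<partial>M) \<le> ennreal (K * x)"
  shows "(\<integral>\<^sup>+\<omega>. ennreal (- log 2 (pmf (replicate_pmf K (geometric_bits_pmf x)) (map (\<lambda>k. a k \<omega>) [0..<K]))) \<partial>M)
    \<le> ennreal (K * theta x)"
proof -
  define c\<^sub>0 where "c\<^sub>0 = log 2 (1 + x)"
  define c\<^sub>1 where "c\<^sub>1 = 1 + log 2 ((1 + x) / x)"
  have "c\<^sub>0 \<ge> 0" "c\<^sub>1 \<ge> 0"
    using \<open>0 < x\<close> by (simp_all add: c\<^sub>0_def c\<^sub>1_def)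
  have pmf_nonzero: "pmf (geometric_bits_pmf x) xs \<noteq> 0" for xs
    using \<open>0 < x\<close> by (simp add: pmf_geometric_bits_pmf)
  have neg_log: "- log 2 (pmf (replicate_pmf K (geometric_bits_pmf x)) (map (\<lambda>k. a k \<omega>) [0..<K]))
      = (\<Sum>k<K. c\<^sub>0 + c\<^sub>1 * length (a k \<omega>))" for \<omega>
  proof -
    have "- log 2 (pmf (replicate_pmf K (geometric_bits_pmf x)) (map (\<lambda>k. a k \<omega>) [0..<K]))
        = (\<Sum>k<K. - log 2 (pmf (geometric_bits_pmf x) (a k \<omega>)))"
      using pmf_nonzero
      by (simp add: pmf_replicate_pmf prod_list_map_upt log_def ln_prod sum_negf sum_divide_distrib)
    also have "\<dots> = (\<Sum>k<K. c\<^sub>0 + c\<^sub>1 * length (a k \<omega>))"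
      by (simp add: neg_log_pmf_geometric_bits_pmf[OF \<open>0 < x\<close>] c\<^sub>0_def c\<^sub>1_def mult.commute)
    finally show ?thesis .
  qed
  have "(\<integral>\<^sup>+\<omega>. ennreal (- log 2 (pmf (replicate_pmf K (geometric_bits_pmf x)) (map (\<lambda>k. a k \<omega>) [0..<K]))) \<partial>M)
      = (\<integral>\<^sup>+\<omega>. (\<Sum>k<K. ennreal c\<^sub>0 + ennreal c\<^sub>1 * ennreal (length (a k \<omega>))) \<partial>M)"
    unfolding neg_log using \<open>c\<^sub>0 \<ge> 0\<close> \<open>c\<^sub>1 \<ge> 0\<close>
    by (simp add: ennreal_mult flip: sum_ennreal)
  also have "\<dots> = of_nat K * ennreal c\<^sub>0 + ennreal c\<^sub>1 * (\<Sum>k<K. \<integral>\<^sup>+\<omega>. ennreal (length (a k \<omega>)) \<partial>M)"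
    by (simp add: nn_integral_sum nn_integral_add nn_integral_cmult emeasure_space_1 sum.distrib sum_distrib_left)
  also have "\<dots> \<le> of_nat K * ennreal c\<^sub>0 + ennreal c\<^sub>1 * ennreal (K * x)"
    by (intro add_left_mono mult_left_mono length_le) simp
  also have "\<dots> = ennreal (K * theta x)"
    using \<open>0 < x\<close> \<open>c\<^sub>0 \<ge> 0\<close> \<open>c\<^sub>1 \<ge> 0\<close>
    by (simp add: theta_altdef c\<^sub>0_def c\<^sub>1_def ennreal_of_nat_eq_real_of_nat algebra_simps flip: ennreal_mult ennreal_plus)
  finally show ?thesis .
qed

lemma (in prob_space) neg_log_prob_nonneg: "0 \<le> - log 2 (prob A)"
proof (cases "prob A = 0")
  case False
  then have "0 < prob A"
    by (simp add: zero_less_measure_iff)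
  then show ?thesis by simp
qed (simp add: log_def)

lemma (in prob_space) AE_prob_fiber_pos:
  assumes "countable C" and Y: "Y \<in> measurable M (count_space C)"
  shows "AE \<omega> in M. 0 < prob (Y -` {Y \<omega>} \<inter> space M)"
proof (rule AE_I')
  let ?N = "{y\<in>C. prob (Y -` {y} \<inter> space M) = 0}"
  show "(\<Union>y\<in>?N. Y -` {y} \<inter> space M) \<in> null_sets M"
    using \<open>countable C\<close> measurable_sets[OF Y]
    by (intro null_sets_UN') (auto simp: null_sets_def emeasure_eq_measure)
  show "{\<omega> \<in> space M. \<not> 0 < prob (Y -` {Y \<omega>} \<inter> space M)} \<subseteq> (\<Union>y\<in>?N. Y -` {y} \<inter> space M)"
    using measurable_space[OF Y] by (auto simp: not_less intro!: antisym)
qed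

lemma (in prob_space) nn_integral_sum_fibers:
  fixes Z :: "'a \<Rightarrow> 'z::countable"
  assumes [measurable]: "Z \<in> measurable M (count_space UNIV)" "f \<in> borel_measurable M"
  shows "(\<integral>\<^sup>+\<omega>. f \<omega> \<partial>M) = (\<integral>\<^sup>+z. (\<integral>\<^sup>+\<omega>. f \<omega> * indicator (Z -` {z} \<inter> space M) \<omega> \<partial>M) \<partial>count_space UNIV)"
proof -
  have "(\<integral>\<^sup>+\<omega>. f \<omega> \<partial>M) = (\<integral>\<^sup>+\<omega>. (\<integral>\<^sup>+z. f \<omega> * indicator (Z -` {z} \<inter> space M) \<omega> \<partial>count_space UNIV) \<partial>M)"
  proof (rule nn_integral_cong)
    fix \<omega> assume "\<omega> \<in> space M"
    then have "(\<integral>\<^sup>+z. f \<omega> * indicator (Z -` {z} \<inter> space M) \<omega> \<partial>count_space UNIV)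
        = (\<integral>\<^sup>+z. f \<omega> * indicator {Z \<omega>} z \<partial>count_space UNIV)"
      by (intro nn_integral_cong) (auto split: split_indicator)
    then show "f \<omega> = (\<integral>\<^sup>+z. f \<omega> * indicator (Z -` {z} \<inter> space M) \<omega> \<partial>count_space UNIV)"
      by (simp add: nn_integral_cmult_indicator)
  qed
  also have "\<dots> = (\<integral>\<^sup>+z. (\<integral>\<^sup>+\<omega>. f \<omega> * indicator (Z -` {z} \<inter> space M) \<omega> \<partial>M) \<partial>count_space UNIV)"
    by (rule nn_integral_count_space_nn_integral) auto
  finally show ?thesis .
qed

lemma (in prob_space) nn_integral_pmf_ratio_le_1:
  fixes Z :: "'a \<Rightarrow> 'z::countable"
  assumes [measurable]: "Z \<in> measurable M (count_space UNIV)"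
  shows "(\<integral>\<^sup>+\<omega>. ennreal (pmf r (Z \<omega>) / prob (Z -` {Z \<omega>} \<inter> space M)) \<partial>M) \<le> 1"
proof -
  define p where "p z = prob (Z -` {z} \<inter> space M)" for z
  have fiber [measurable]: "Z -` {z} \<inter> space M \<in> sets M" for z
    by (rule measurable_sets[OF assms]) auto
  have "(\<integral>\<^sup>+\<omega>. ennreal (pmf r (Z \<omega>) / p (Z \<omega>)) \<partial>M)
      = (\<integral>\<^sup>+z. (\<integral>\<^sup>+\<omega>. ennreal (pmf r (Z \<omega>) / p (Z \<omega>)) * indicator (Z -` {z} \<inter> space M) \<omega> \<partial>M) \<partial>count_space UNIV)"
    by (rule nn_integral_sum_fibers) auto
  also have "\<dots> \<le> (\<integral>\<^sup>+z. ennreal (pmf r z) \<partial>count_space UNIV)"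
  proof (rule nn_integral_mono)
    fix z
    have "(\<integral>\<^sup>+\<omega>. ennreal (pmf r (Z \<omega>) / p (Z \<omega>)) * indicator (Z -` {z} \<inter> space M) \<omega> \<partial>M)
        = (\<integral>\<^sup>+\<omega>. ennreal (pmf r z / p z) * indicator (Z -` {z} \<inter> space M) \<omega> \<partial>M)"
      by (intro nn_integral_cong) (auto split: split_indicator)
    also have "\<dots> = ennreal (pmf r z / p z) * ennreal (p z)"
      by (simp add: nn_integral_cmult_indicator emeasure_eq_measure p_def)
    also have "\<dots> = ennreal (pmf r z / p z * p z)"
      by (rule ennreal_mult''[symmetric]) (simp add: p_def)
    also have "\<dots> \<le> ennreal (pmf r z)"
      by (cases "p z = 0") auto
    finally show "(\<integral>\<^sup>+\<omega>. ennreal (pmf r (Z \<omega>) / p (Z \<omega>)) * indicator (Z -` {z} \<inter> space M) \<omega> \<partial>M)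
        \<le> ennreal (pmf r z)" .
  qed
  also have "\<dots> = 1"
    using nn_integral_pmf[of UNIV r] by (simp add: measure_pmf.emeasure_space_1)
  finally show ?thesis unfolding p_def .
qed

lemma neg_log_le_neg_log_plus_ratio:
  fixes p r :: real
  assumes "0 < p" "0 < r"
  shows "- log 2 p + 1 / ln 2 \<le> - log 2 r + 1 / ln 2 * (r / p)"
proof -
  have "ln (r / p) \<le> r / p - 1"
    using assms by (intro ln_le_minus_one) auto
  then have "(ln r - ln p + 1) / ln 2 \<le> r / p / ln 2"
    using assms by (intro divide_right_mono) (auto simp: ln_div)
  moreover have "(ln r - ln p + 1) / ln 2 = ln r / ln 2 - ln p / ln 2 + 1 / ln 2"
    by (simp add: add_divide_distrib diff_divide_distrib)
  moreover have "1 / ln 2 * (r / p) = r / p / ln 2"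
    by simp
  ultimately show ?thesis
    unfolding log_def by linarith
qed

lemma (in prob_space) gibbs_inequality:
  fixes Z :: "'a \<Rightarrow> 'z::countable"
  assumes Z [measurable]: "Z \<in> measurable M (count_space UNIV)"
    and r_pos: "AE \<omega> in M. 0 < pmf r (Z \<omega>)"
  shows "(\<integral>\<^sup>+\<omega>. ennreal (- log 2 (prob (Z -` {Z \<omega>} \<inter> space M))) \<partial>M)
          \<le> (\<integral>\<^sup>+\<omega>. ennreal (- log 2 (pmf r (Z \<omega>))) \<partial>M)"
proof -
  define p where "p \<omega> = prob (Z -` {Z \<omega>} \<inter> space M)" for \<omega>
  have [measurable]: "p \<in> borel_measurable M"
    unfolding p_def by (rule measurable_compose[OF Z]) simp
  have p_pos: "AE \<omega> in M. 0 < p \<omega>"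
    unfolding p_def by (rule AE_prob_fiber_pos[of UNIV]) auto
  have "(\<integral>\<^sup>+\<omega>. ennreal (- log 2 (p \<omega>)) \<partial>M) + ennreal (1 / ln 2)
      = (\<integral>\<^sup>+\<omega>. ennreal (- log 2 (p \<omega>)) + ennreal (1 / ln 2) \<partial>M)"
    by (simp add: nn_integral_add emeasure_space_1)
  also have "\<dots> \<le> (\<integral>\<^sup>+\<omega>. ennreal (- log 2 (pmf r (Z \<omega>))) + ennreal (1 / ln 2) * ennreal (pmf r (Z \<omega>) / p \<omega>) \<partial>M)"
    using p_pos r_pos
  proof (intro nn_integral_mono_AE, eventually_elim)
    case (elim \<omega>)
    have "p \<omega> \<le> 1" "pmf r (Z \<omega>) \<le> 1"
      by (simp_all add: p_def pmf_le_1)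
    with elim have "ennreal (- log 2 (p \<omega>)) + ennreal (1 / ln 2) = ennreal (- log 2 (p \<omega>) + 1 / ln 2)"
      by (intro ennreal_plus[symmetric]) auto
    also have "\<dots> \<le> ennreal (- log 2 (pmf r (Z \<omega>)) + 1 / ln 2 * (pmf r (Z \<omega>) / p \<omega>))"
      by (rule ennreal_leI[OF neg_log_le_neg_log_plus_ratio[OF \<open>0 < p \<omega>\<close> \<open>0 < pmf r (Z \<omega>)\<close>]])
    also have "\<dots> = ennreal (- log 2 (pmf r (Z \<omega>))) + ennreal (1 / ln 2) * ennreal (pmf r (Z \<omega>) / p \<omega>)"
      using elim \<open>pmf r (Z \<omega>) \<le> 1\<close> by (subst ennreal_plus) (auto simp flip: ennreal_mult')
    finally show ?case .
  qed
  also have "\<dots> = (\<integral>\<^sup>+\<omega>. ennreal (- log 2 (pmf r (Z \<omega>))) \<partial>M)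
      + ennreal (1 / ln 2) * (\<integral>\<^sup>+\<omega>. ennreal (pmf r (Z \<omega>) / p \<omega>) \<partial>M)"
    by (simp add: nn_integral_add nn_integral_cmult)
  also have "\<dots> \<le> (\<integral>\<^sup>+\<omega>. ennreal (- log 2 (pmf r (Z \<omega>))) \<partial>M) + ennreal (1 / ln 2)"
    using nn_integral_pmf_ratio_le_1[OF Z, of r]
    by (intro add_left_mono) (auto simp: p_def intro: mult_left_le)
  finally have "ennreal (1 / ln 2) + (\<integral>\<^sup>+\<omega>. ennreal (- log 2 (p \<omega>)) \<partial>M)
      \<le> ennreal (1 / ln 2) + (\<integral>\<^sup>+\<omega>. ennreal (- log 2 (pmf r (Z \<omega>))) \<partial>M)"
    by (simp add: add.commute)
  then show ?thesis
    unfolding p_def by (simp add: ennreal_add_left_cancel_le)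
qed

lemma measurable_map_upt:
  fixes a :: "nat \<Rightarrow> 'a \<Rightarrow> 'b::countable"
  assumes [measurable]: "\<And>k. a k \<in> measurable M (count_space UNIV)"
  shows "(\<lambda>\<omega>. map (\<lambda>k. a k \<omega>) [0..<K]) \<in> measurable M (count_space UNIV)"
proof (induction K)
  case (Suc K)
  then show ?case by simp
qed simp

lemma countable_image_if_factors:
  fixes Z :: "'a \<Rightarrow> 'z::countable"
  assumes "\<And>\<omega> \<omega>'. \<omega> \<in> A \<Longrightarrow> \<omega>' \<in> A \<Longrightarrow> Z \<omega> = Z \<omega>' \<Longrightarrow> Y \<omega> = Y \<omega>'"
  shows "countable (Y ` A)"
proof -
  have "Y ` A \<subseteq> range (\<lambda>z. Y (SOME \<omega>. \<omega> \<in> A \<and> Z \<omega> = z))"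
  proof
    fix y assume "y \<in> Y ` A"
    then obtain \<omega> where \<omega>: "\<omega> \<in> A" "y = Y \<omega>" by blast
    define \<omega>' where "\<omega>' = (SOME \<omega>'. \<omega>' \<in> A \<and> Z \<omega>' = Z \<omega>)"
    have "\<omega>' \<in> A \<and> Z \<omega>' = Z \<omega>"
      unfolding \<omega>'_def by (rule someI[of _ \<omega>]) (simp add: \<omega>(1))
    then have "Y \<omega>' = Y \<omega>"
      using \<omega>(1) by (auto intro: assms)
    then have "y = (\<lambda>z. Y (SOME \<omega>. \<omega> \<in> A \<and> Z \<omega> = z)) (Z \<omega>)"
      by (simp add: \<omega>(2) \<omega>'_def)
    then show "y \<in> range (\<lambda>z. Y (SOME \<omega>. \<omega> \<in> A \<and> Z \<omega> = z))"
      by (rule range_eqI)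
  qed
  then show ?thesis
    by (rule countable_subset) simp
qed

lemma (in prob_space) nn_integral_neg_log_prob_fiber_mono:
  fixes Z :: "'a \<Rightarrow> 'z::countable"
  assumes "Z \<in> measurable M (count_space UNIV)"
    and fiber_Y: "\<And>\<omega>. \<omega> \<in> space M \<Longrightarrow> Y -` {Y \<omega>} \<inter> space M \<in> sets M"
    and factors: "\<And>\<omega> \<omega>'. \<omega> \<in> space M \<Longrightarrow> \<omega>' \<in> space M \<Longrightarrow> Z \<omega> = Z \<omega>' \<Longrightarrow> Y \<omega> = Y \<omega>'"
  shows "(\<integral>\<^sup>+\<omega>. ennreal (- log 2 (prob (Y -` {Y \<omega>} \<inter> space M))) \<partial>M)
    \<le> (\<integral>\<^sup>+\<omega>. ennreal (- log 2 (prob (Z -` {Z \<omega>} \<inter> space M))) \<partial>M)"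
proof (rule nn_integral_mono_AE)
  have "AE \<omega> in M. 0 < prob (Z -` {Z \<omega>} \<inter> space M)"
    by (rule AE_prob_fiber_pos[of UNIV]) (simp_all add: assms(1))
  then show "AE \<omega> in M. ennreal (- log 2 (prob (Y -` {Y \<omega>} \<inter> space M)))
      \<le> ennreal (- log 2 (prob (Z -` {Z \<omega>} \<inter> space M)))"
    using AE_space
  proof eventually_elim
    case (elim \<omega>)
    have "Z -` {Z \<omega>} \<inter> space M \<subseteq> Y -` {Y \<omega>} \<inter> space M"
      using factors elim(2) by blast
    then have "prob (Z -` {Z \<omega>} \<inter> space M) \<le> prob (Y -` {Y \<omega>} \<inter> space M)"
      using fiber_Y[OF elim(2)] by (rule finite_measure_mono)
    with elim show ?case
      by (intro ennreal_leI) simp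
  qed
qed

lemma ennreal_mult_neg_log_le:
  fixes t :: ennreal
  shows "t * ennreal (- log 2 (enn2real t)) \<le> ennreal (1 / ln 2)"
proof (cases t)
  case (real s)
  show ?thesis
  proof (cases "0 < s \<and> s < 1")
    case True
    have "- ln s \<le> 1 / s"
      using ln_le_minus_one[of "1 / s"] True by (simp add: ln_div)
    then have "s * (- log 2 s) \<le> 1 / ln 2"
      using True by (simp add: log_def field_simps)
    moreover have "t * ennreal (- log 2 (enn2real t)) = ennreal (s * (- log 2 s))"
      using True real by (subst ennreal_mult) auto
    ultimately show ?thesis
      by (simp add: ennreal_leI)
  next
    case False
    with real have "- log 2 s \<le> 0"
      by (auto simp: log_def not_less)
    with real show ?thesis
      by (simp add: ennreal_neg)
  qed
qed (simp add: log_def)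

(* ennreal cuts off at 0, so the left-hand side integrates the negative part of the density. *)
lemma nn_integral_neg_entropy_density_le:
  assumes "prob_space P" "absolutely_continuous P Q" "sets Q = sets P"
  shows "(\<integral>\<^sup>+z. ennreal (- entropy_density 2 P Q z) \<partial>Q) \<le> ennreal (1 / ln 2)"
proof -
  interpret P: prob_space P by fact
  have "(\<integral>\<^sup>+z. ennreal (- entropy_density 2 P Q z) \<partial>Q)
      = (\<integral>\<^sup>+z. ennreal (- entropy_density 2 P Q z) \<partial>density P (RN_deriv P Q))"
    using P.density_RN_deriv[OF assms(2,3)] by simp
  also have "\<dots> = (\<integral>\<^sup>+z. RN_deriv P Q z * ennreal (- entropy_density 2 P Q z) \<partial>P)"
    by (simp add: nn_integral_density)
  also have "\<dots> \<le> (\<integral>\<^sup>+z. ennreal (1 / ln 2) \<partial>P)"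
    by (intro nn_integral_mono) (simp add: entropy_density_def ennreal_mult_neg_log_le)
  finally show ?thesis
    by (simp add: P.emeasure_space_1)
qed

lemma (in finite_measure) AE_le_if_density_le:
  assumes [measurable]: "g \<in> borel_measurable M" and N [measurable]: "N \<in> sets M"
    and le: "\<And>A. A \<in> sets M \<Longrightarrow> A \<subseteq> N \<Longrightarrow> emeasure (density M g) A \<le> ennreal c * emeasure M A"
  shows "AE z in M. z \<in> N \<longrightarrow> g z \<le> ennreal c"
proof -
  define A where "A = N \<inter> {z \<in> space M. ennreal c < g z}"
  have A [measurable]: "A \<in> sets M"
    unfolding A_def by measurable
  have "A \<in> null_sets M"
  proof (rule ccontr)
    assume "A \<notin> null_sets M"
    have "(\<integral>\<^sup>+z. ennreal c * indicator A z \<partial>M) < (\<integral>\<^sup>+z. g z * indicator A z \<partial>M)"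
    proof (rule nn_integral_less)
      show "(\<integral>\<^sup>+z. ennreal c * indicator A z \<partial>M) \<noteq> \<infinity>"
        by (simp add: nn_integral_cmult_indicator emeasure_eq_measure ennreal_mult_eq_top_iff)
      show "AE z in M. ennreal c * indicator A z \<le> g z * indicator A z"
        by (intro AE_I2) (auto simp: A_def split: split_indicator)
      show "\<not> (AE z in M. g z * indicator A z \<le> ennreal c * indicator A z)"
      proof
        assume "AE z in M. g z * indicator A z \<le> ennreal c * indicator A z"
        then have "AE z in M. z \<notin> A"
          by eventually_elim (auto simp: A_def split: split_indicator)
        with \<open>A \<notin> null_sets M\<close> show False
          by (simp add: AE_iff_null_sets[OF A])
      qed
    qed simp_all
    moreover have "(\<integral>\<^sup>+z. g z * indicator A z \<partial>M) \<le> (\<integral>\<^sup>+z. ennreal c * indicator A z \<partial>M)"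
      using le[OF A] by (simp add: emeasure_density nn_integral_cmult_indicator A_def)
    ultimately show False by simp
  qed
  then have "AE z in M. z \<notin> A"
    by (simp add: AE_iff_null_sets[OF A])
  then show ?thesis
    by eventually_elim (use sets.sets_into_space[OF N] in \<open>auto simp: A_def not_less\<close>)
qed

locale discrete_observation = prob_space M for M :: "'a measure" +
  fixes S :: "'b measure" and T :: "'c measure" and X :: "'a \<Rightarrow> 'b" and Y :: "'a \<Rightarrow> 'c"
  assumes measurable_X [measurable]: "X \<in> measurable M S"
    and measurable_Y [measurable]: "Y \<in> measurable M T"
    and countable_range_Y: "countable (Y ` space M)"
    and singleton_sets_T: "\<And>y. y \<in> space T \<Longrightarrow> {y} \<in> sets T"
begin

abbreviation "law_X \<equiv> distr M S X"
abbreviation "law_Y \<equiv> distr M T Y"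
abbreviation "product_law \<equiv> law_X \<Otimes>\<^sub>M law_Y"
abbreviation "joint_law \<equiv> distr M (S \<Otimes>\<^sub>M T) (\<lambda>\<omega>. (X \<omega>, Y \<omega>))"
abbreviation "info_density \<equiv> entropy_density 2 product_law joint_law"
abbreviation "surprisal \<omega> \<equiv> - log 2 (prob (Y -` {Y \<omega>} \<inter> space M))"

lemma measurable_Y_count_space: "Y \<in> measurable M (count_space (Y ` space M))"
  unfolding measurable_count_space_eq_countable[OF countable_range_Y]
  using measurable_space[OF measurable_Y]
  by (auto intro!: measurable_sets[OF measurable_Y] singleton_sets_T)

lemma measurable_joint [measurable]: "(\<lambda>\<omega>. (X \<omega>, Y \<omega>)) \<in> measurable M (S \<Otimes>\<^sub>M T)"
  by measurable

lemma sets_product_law: "sets product_law = sets (S \<Otimes>\<^sub>M T)"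
  by (intro sets_pair_measure_cong) simp_all

lemma prob_space_product_law: "prob_space product_law"
  by (intro prob_space_pair prob_space_distr) simp_all

(* On the slice {Y = y} the joint law is dominated both by law_X and by P(Y = y). If P(Y = y) = 0,
   the junk value 1 / 0 = 0 is harmless since the slice is then a joint null set. *)
lemma emeasure_joint_law_slice_le:
  assumes "y \<in> space T" "E \<in> sets (S \<Otimes>\<^sub>M T)" "E \<subseteq> space S \<times> {y}"
  shows "emeasure joint_law E \<le> ennreal (1 / prob (Y -` {y} \<inter> space M)) * emeasure product_law E"
proof -
  define q where "q = prob (Y -` {y} \<inter> space M)"
  define E' where "E' = (\<lambda>x. (x, y)) -` E"
  have E' [measurable]: "E' \<in> sets S"
    unfolding E'_def using assms(2) by (rule sets_Pair2)
  have E_eq: "E = E' \<times> {y}"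
    using assms(3) by (auto simp: E'_def)
  have [measurable]: "{y} \<in> sets T"
    using assms(1) by (rule singleton_sets_T)
  have "emeasure product_law E = emeasure law_X E' * emeasure law_Y {y}"
    unfolding E_eq
    by (intro sigma_finite_measure.emeasure_pair_measure_Times prob_space_imp_sigma_finite
        prob_space_distr measurable_Y) simp_all
  also have "emeasure law_Y {y} = ennreal q"
    by (simp add: emeasure_distr emeasure_eq_measure q_def)
  finally have product: "emeasure product_law E = emeasure law_X E' * ennreal q" .
  have joint: "emeasure joint_law E = emeasure M ((X -` E' \<inter> space M) \<inter> (Y -` {y} \<inter> space M))"
    using assms(2) by (simp add: emeasure_distr E_eq) (intro arg_cong[where f = "emeasure M"], auto)
  have le_X: "emeasure joint_law E \<le> emeasure law_X E'"
    unfolding joint by (simp add: emeasure_distr) (rule emeasure_mono, blast, measurable)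
  have le_Y: "emeasure joint_law E \<le> ennreal q"
    unfolding joint q_def emeasure_eq_measure[symmetric] by (rule emeasure_mono) (blast, measurable)
  show ?thesis
    unfolding q_def[symmetric]
  proof (cases "q = 0")
    case True
    with le_Y show "emeasure joint_law E \<le> ennreal (1 / q) * emeasure product_law E"
      by simp
  next
    case False
    then have "ennreal (1 / q) * ennreal q = 1"
      by (subst ennreal_mult[symmetric]) (auto simp: q_def)
    then have "ennreal (1 / q) * emeasure product_law E = emeasure law_X E'"
      unfolding product mult.left_commute[of "ennreal (1 / q)"] by simp
    with le_X show "emeasure joint_law E \<le> ennreal (1 / q) * emeasure product_law E"
      by (simp only:)
  qed
qed

lemma absolutely_continuous_joint_law: "absolutely_continuous product_law joint_law"
  unfolding absolutely_continuous_def
proof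
  fix E assume null: "E \<in> null_sets product_law"
  have E: "E \<in> sets (S \<Otimes>\<^sub>M T)" "emeasure product_law E = 0"
    using null_setsD2[OF null] null_setsD1[OF null] unfolding sets_product_law by auto
  let ?slice = "\<lambda>y. E \<inter> space S \<times> {y}"
  let ?preimage = "\<lambda>A. (\<lambda>\<omega>. (X \<omega>, Y \<omega>)) -` A \<inter> space M"
  have "?preimage (?slice y) \<in> null_sets M" if "y \<in> Y ` space M" for y
  proof -
    have y: "y \<in> space T"
      using that measurable_space[OF measurable_Y] by auto
    then have slice: "?slice y \<in> sets (S \<Otimes>\<^sub>M T)"
      by (intro sets.Int[OF E(1)] pair_measureI[OF sets.top singleton_sets_T])
    have "emeasure joint_law (?slice y) \<le> ennreal (1 / prob (Y -` {y} \<inter> space M)) * emeasure product_law (?slice y)"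
      using y slice by (rule emeasure_joint_law_slice_le) blast
    also have "emeasure product_law (?slice y) = 0"
      using null_setsD2[OF null] E(2) by (rule emeasure_eq_0) blast
    finally have "?slice y \<in> null_sets joint_law"
      using slice by (simp add: null_sets_def)
    then show ?thesis
      by (simp add: null_sets_distr_iff[OF measurable_joint])
  qed
  then have union_null: "(\<Union>y\<in>Y ` space M. ?preimage (?slice y)) \<in> null_sets M"
    by (rule null_sets_UN'[OF countable_range_Y])
  have "?preimage E \<subseteq> (\<Union>y\<in>Y ` space M. ?preimage (?slice y))"
    using measurable_space[OF measurable_X] by auto
  with union_null have "?preimage E \<in> null_sets M"
    by (rule null_sets_subset[OF _ measurable_sets[OF measurable_joint E(1)]])
  then show "E \<in> null_sets joint_law"
    using E(1) by (simp add: null_sets_distr_iff[OF measurable_joint])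
qed

lemma AE_RN_deriv_le:
  "AE z in product_law. snd z \<in> Y ` space M \<longrightarrow>
     RN_deriv product_law joint_law z \<le> ennreal (1 / prob (Y -` {snd z} \<inter> space M))"
proof -
  interpret P: prob_space product_law
    by (rule prob_space_product_law)
  have density: "density product_law (RN_deriv product_law joint_law) = joint_law"
    using absolutely_continuous_joint_law by (rule P.density_RN_deriv) (simp only: sets_distr sets_product_law)
  have "AE z in product_law. z \<in> space S \<times> {y} \<longrightarrow>
      RN_deriv product_law joint_law z \<le> ennreal (1 / prob (Y -` {y} \<inter> space M))"
    if "y \<in> Y ` space M" for y
  proof (rule P.AE_le_if_density_le)
    have y: "y \<in> space T"
      using that measurable_space[OF measurable_Y] by auto
    then show "space S \<times> {y} \<in> sets product_law"
      unfolding sets_product_law by (intro pair_measureI sets.top singleton_sets_T)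
    show "emeasure (density product_law (RN_deriv product_law joint_law)) A
        \<le> ennreal (1 / prob (Y -` {y} \<inter> space M)) * emeasure product_law A"
      if "A \<in> sets product_law" "A \<subseteq> space S \<times> {y}" for A
      unfolding density using y that(1)[unfolded sets_product_law] that(2)
      by (rule emeasure_joint_law_slice_le)
  qed (rule borel_measurable_RN_deriv)
  then have "AE z in product_law. \<forall>y\<in>Y ` space M. z \<in> space S \<times> {y} \<longrightarrow>
      RN_deriv product_law joint_law z \<le> ennreal (1 / prob (Y -` {y} \<inter> space M))"
    by (subst AE_ball_countable[OF countable_range_Y]) blast
  then show ?thesis
    using AE_space
  proof eventually_elim
    case (elim z)
    then have "fst z \<in> space S"
      by (simp add: space_pair_measure mem_Times_iff)
    with elim(1) show ?case
      by (cases z) auto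
  qed
qed

lemma AE_info_density_le: "AE \<omega> in M. info_density (X \<omega>, Y \<omega>) \<le> surprisal \<omega>"
proof -
  interpret P: prob_space product_law
    by (rule prob_space_product_law)
  let ?g = "RN_deriv product_law joint_law"
  have density: "density product_law ?g = joint_law"
    using absolutely_continuous_joint_law by (rule P.density_RN_deriv) (simp only: sets_distr sets_product_law)
  have "AE z in joint_law. snd z \<in> Y ` space M \<longrightarrow> ?g z \<le> ennreal (1 / prob (Y -` {snd z} \<inter> space M))"
    using absolutely_continuous_joint_law AE_RN_deriv_le
    by (rule absolutely_continuous_AE[rotated]) (simp only: sets_distr sets_product_law)
  from AE_distrD[OF measurable_joint this]
  have "AE \<omega> in M. ?g (X \<omega>, Y \<omega>) \<le> ennreal (1 / prob (Y -` {Y \<omega>} \<inter> space M))"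
    using AE_space by eventually_elim auto
  moreover have "AE z in density product_law ?g. 0 < ?g z"
    by (subst AE_density) auto
  from AE_distrD[OF measurable_joint this[unfolded density]]
  have "AE \<omega> in M. 0 < ?g (X \<omega>, Y \<omega>)"
    by simp
  moreover have "AE \<omega> in M. 0 < prob (Y -` {Y \<omega>} \<inter> space M)"
    using countable_range_Y measurable_Y_count_space by (rule AE_prob_fiber_pos)
  ultimately show ?thesis
  proof eventually_elim
    case (elim \<omega>)
    let ?q = "prob (Y -` {Y \<omega>} \<inter> space M)"
    have "?g (X \<omega>, Y \<omega>) < \<infinity>"
      using elim(1) by (rule le_less_trans) simp
    with elim(2) have "0 < enn2real (?g (X \<omega>, Y \<omega>))"
      by (simp add: enn2real_positive_iff)
    moreover have "enn2real (?g (X \<omega>, Y \<omega>)) \<le> 1 / ?q"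
      using enn2real_mono[OF elim(1)] elim(3) by simp
    ultimately have "log 2 (enn2real (?g (X \<omega>, Y \<omega>))) \<le> log 2 (1 / ?q)"
      using elim(3) by (subst log_le_cancel_iff) auto
    then show ?case
      using elim by (simp add: entropy_density_def log_divide)
  qed
qed

lemma borel_measurable_surprisal [measurable]:
  "(\<lambda>\<omega>. surprisal \<omega>) \<in> borel_measurable M"
  by (rule measurable_compose[OF measurable_Y_count_space]) simp

lemma borel_measurable_info_density [measurable]: "info_density \<in> borel_measurable (S \<Otimes>\<^sub>M T)"
  using measurable_entropy_density[of 2 product_law joint_law]
  unfolding measurable_cong_sets[OF sets_product_law refl] .

lemma integrable_info_density:
  assumes finite: "(\<integral>\<^sup>+\<omega>. ennreal (surprisal \<omega>) \<partial>M) < \<infinity>"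
  shows "integrable M (\<lambda>\<omega>. info_density (X \<omega>, Y \<omega>))"
proof (rule integrableI_bounded)
  have "(\<integral>\<^sup>+\<omega>. ennreal (- info_density (X \<omega>, Y \<omega>)) \<partial>M) = (\<integral>\<^sup>+z. ennreal (- info_density z) \<partial>joint_law)"
    by (rule nn_integral_distr[symmetric, OF measurable_joint]) measurable
  also have "\<dots> \<le> ennreal (1 / ln 2)"
    using prob_space_product_law absolutely_continuous_joint_law
    by (rule nn_integral_neg_entropy_density_le) (simp only: sets_distr sets_product_law)
  finally have neg_part: "(\<integral>\<^sup>+\<omega>. ennreal (- info_density (X \<omega>, Y \<omega>)) \<partial>M) < \<infinity>"
    by (rule le_less_trans) simp
  have "(\<integral>\<^sup>+\<omega>. ennreal (norm (info_density (X \<omega>, Y \<omega>))) \<partial>M)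
      \<le> (\<integral>\<^sup>+\<omega>. ennreal (surprisal \<omega>) + ennreal (- info_density (X \<omega>, Y \<omega>)) \<partial>M)"
    using AE_info_density_le
  proof (intro nn_integral_mono_AE, eventually_elim)
    case (elim \<omega>)
    then have "norm (info_density (X \<omega>, Y \<omega>)) \<le> surprisal \<omega> + max 0 (- info_density (X \<omega>, Y \<omega>))"
      using neg_log_prob_nonneg[of "Y -` {Y \<omega>} \<inter> space M"] by auto
    then have "ennreal (norm (info_density (X \<omega>, Y \<omega>)))
        \<le> ennreal (surprisal \<omega> + max 0 (- info_density (X \<omega>, Y \<omega>)))"
      by (rule ennreal_leI)
    then show ?case
      using neg_log_prob_nonneg[of "Y -` {Y \<omega>} \<inter> space M"] by (subst (asm) ennreal_plus) auto
  qed
  also have "\<dots> < \<infinity>"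
    using finite neg_part by (simp add: nn_integral_add)
  finally show "(\<integral>\<^sup>+\<omega>. ennreal (norm (info_density (X \<omega>, Y \<omega>))) \<partial>M) < \<infinity>" .
qed measurable

theorem mutual_info_bits_le: "mutual_info_bits M S T X Y \<le> (\<integral>\<^sup>+\<omega>. ennreal (surprisal \<omega>) \<partial>M)"
proof (cases "(\<integral>\<^sup>+\<omega>. ennreal (surprisal \<omega>) \<partial>M) < \<infinity>")
  case True
  have surprisal_nonneg: "0 \<le> surprisal \<omega>" for \<omega>
    by (rule neg_log_prob_nonneg)
  have integrable_surprisal: "integrable M (\<lambda>\<omega>. surprisal \<omega>)"
    using borel_measurable_surprisal AE_I2[OF surprisal_nonneg] True by (rule integrableI_nonneg)
  have integrable: "integrable M (\<lambda>\<omega>. info_density (X \<omega>, Y \<omega>))"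
    using True by (rule integrable_info_density)
  then have "integrable joint_law info_density"
    by (subst integrable_distr_eq[OF measurable_joint borel_measurable_info_density])
  then have "mutual_info_bits M S T X Y = ennreal (mutual_information 2 S T X Y)"
    using absolutely_continuous_joint_law
    unfolding mutual_info_bits_def Let_def by (simp only: simp_thms if_True)
  also have "mutual_information 2 S T X Y = (\<integral>\<omega>. info_density (X \<omega>, Y \<omega>) \<partial>M)"
    unfolding mutual_information_def KL_divergence_def
    by (rule integral_distr[OF measurable_joint borel_measurable_info_density])
  also have "ennreal \<dots> \<le> ennreal (\<integral>\<omega>. surprisal \<omega> \<partial>M)"
    using integrable integrable_surprisal AE_info_density_le by (intro ennreal_leI integral_mono_AE)
  also have "\<dots> = (\<integral>\<^sup>+\<omega>. ennreal (surprisal \<omega>) \<partial>M)"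
    using integrable_surprisal surprisal_nonneg by (simp add: nn_integral_eq_integral)
  finally show ?thesis .
qed (simp add: not_less top_unique)

end

lemma (in prob_space) mutual_info_bits_le_expected_length:
  fixes a :: "nat \<Rightarrow> 'a \<Rightarrow> bool list" and x :: real
  assumes "X \<in> measurable M S" "Y \<in> measurable M T" "\<And>y. y \<in> space T \<Longrightarrow> {y} \<in> sets T"
    and a: "\<And>k. a k \<in> measurable M (count_space UNIV)"
    and factors: "\<And>\<omega> \<omega>'. \<omega> \<in> space M \<Longrightarrow> \<omega>' \<in> space M \<Longrightarrow> (\<And>k. k < K \<Longrightarrow> a k \<omega> = a k \<omega>') \<Longrightarrow> Y \<omega> = Y \<omega>'"
    and "0 < x" and length_le: "(\<Sum>k<K. \<integral>\<^sup>+\<omega>. ennreal (length (a k \<omega>)) \<partial>M) \<le> ennreal (K * x)"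
  shows "mutual_info_bits M S T X Y \<le> ennreal (K * theta x)"
proof -
  define Z where "Z \<omega> = map (\<lambda>k. a k \<omega>) [0..<K]" for \<omega>
  have Z: "Z \<in> measurable M (count_space UNIV)"
    unfolding Z_def using a by (rule measurable_map_upt)
  have Y_Z: "Y \<omega> = Y \<omega>'" if "\<omega> \<in> space M" "\<omega>' \<in> space M" "Z \<omega> = Z \<omega>'" for \<omega> \<omega>'
  proof (rule factors)
    fix k assume "k < K"
    with \<open>Z \<omega> = Z \<omega>'\<close> show "a k \<omega> = a k \<omega>'"
      by (simp add: Z_def)
  qed (use that in blast)+
  have "countable (Y ` space M)"
    by (rule countable_image_if_factors[OF Y_Z])
  with assms(1-3) interpret discrete_observation M S T X Y
    by unfold_locales
  have fiber_Y: "Y -` {Y \<omega>} \<inter> space M \<in> sets M" if "\<omega> \<in> space M" for \<omega>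
    using that by (intro measurable_sets[OF measurable_Y_count_space]) auto
  have "mutual_info_bits M S T X Y \<le> (\<integral>\<^sup>+\<omega>. ennreal (- log 2 (prob (Y -` {Y \<omega>} \<inter> space M))) \<partial>M)"
    by (rule mutual_info_bits_le)
  also have "\<dots> \<le> (\<integral>\<^sup>+\<omega>. ennreal (- log 2 (prob (Z -` {Z \<omega>} \<inter> space M))) \<partial>M)"
    using Z fiber_Y Y_Z by (rule nn_integral_neg_log_prob_fiber_mono)
  also have "\<dots> \<le> (\<integral>\<^sup>+\<omega>. ennreal (- log 2 (pmf (replicate_pmf K (geometric_bits_pmf x)) (Z \<omega>))) \<partial>M)"
  proof (rule gibbs_inequality[OF Z AE_I2])
    show "0 < pmf (replicate_pmf K (geometric_bits_pmf x)) (Z \<omega>)" for \<omega>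
      using \<open>0 < x\<close> by (simp add: Z_def pmf_replicate_pmf prod_list_map_upt pmf_geometric_bits_pmf prod_pos)
  qed
  also have "\<dots> \<le> ennreal (K * theta x)"
    unfolding Z_def using \<open>0 < x\<close> a length_le by (rule nn_integral_neg_log_replicate_geometric_bits_le)
  finally show ?thesis .
qed

lemma borel_measurable_vec_lambda:
  fixes f :: "'n::finite \<Rightarrow> 'a \<Rightarrow> real"
  assumes "\<And>i. f i \<in> borel_measurable M"
  shows "(\<lambda>x. \<chi> i. f i x) \<in> borel_measurable M"
  using assms by (auto simp: borel_measurable_euclidean_space[where 'c="real^'n"] Basis_vec_def inner_axis)

lemma vimage_algebra_measurable_eq:
  fixes h :: "'a \<Rightarrow> 'b::t1_space"
  assumes "h \<in> borel_measurable (vimage_algebra \<Omega> f N)" "f \<in> \<Omega> \<rightarrow> space N"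
    and "\<omega> \<in> \<Omega>" "\<omega>' \<in> \<Omega>" "f \<omega> = f \<omega>'"
  shows "h \<omega> = h \<omega>'"
proof -
  have "h -` {h \<omega>} \<inter> \<Omega> \<in> sets (vimage_algebra \<Omega> f N)"
    using measurable_sets[OF assms(1) borel_closed[OF closed_singleton]] by simp
  then obtain A where "h -` {h \<omega>} \<inter> \<Omega> = f -` A \<inter> \<Omega>"
    unfolding sets_vimage_algebra2[OF assms(2)] by blast
  then have fiber: "\<forall>x\<in>\<Omega>. h x = h \<omega> \<longleftrightarrow> f x \<in> A"
    by (auto simp: set_eq_iff)
  with assms(3) have "f \<omega> \<in> A"
    by blast
  with fiber assms(4,5) show ?thesis
    by auto
qed

lemma borel_measurable_xhat: "xhat M tau X a k \<in> borel_measurable M"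
  unfolding xhat_def[abs_def] by (intro borel_measurable_vec_lambda borel_measurable_cond_exp2)

lemma xhat_eq_if_codewords_eq:
  assumes "\<omega> \<in> space M" "\<omega>' \<in> space M" "\<And>j. j \<le> k \<Longrightarrow> a j \<omega> = a j \<omega>'"
  shows "xhat M tau X a k \<omega> = xhat M tau X a k \<omega>'"
proof -
  have codewords: "map (\<lambda>j. a j \<omega>) [0..<Suc k] = map (\<lambda>j. a j \<omega>') [0..<Suc k]"
    using assms(3) by (simp add: less_Suc_eq_le)
  have "real_cond_exp M (vimage_algebra (space M) (\<lambda>\<omega>. map (\<lambda>j. a j \<omega>) [0..<Suc k]) (count_space UNIV))
      (\<lambda>\<omega>. X (real k * tau) \<omega> $ i) \<omega>
    = real_cond_exp M (vimage_algebra (space M) (\<lambda>\<omega>. map (\<lambda>j. a j \<omega>) [0..<Suc k]) (count_space UNIV))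
      (\<lambda>\<omega>. X (real k * tau) \<omega> $ i) \<omega>'" for i
    by (rule vimage_algebra_measurable_eq[OF borel_measurable_cond_exp _ assms(1,2) codewords]) simp
  then show ?thesis
    unfolding xhat_def by (simp add: vec_eq_iff)
qed

lemma singleton_sets_PiM:
  assumes "finite I" "y \<in> space (Pi\<^sub>M I (\<lambda>_. borel :: 'b::t1_space measure))"
  shows "{y} \<in> sets (Pi\<^sub>M I (\<lambda>_. borel :: 'b measure))"
proof -
  have "y \<in> extensional I"
    using assms(2) by (simp add: space_PiM PiE_def)
  then have "{y} = PiE I (\<lambda>i. {y i})"
    by (simp add: PiE_singleton)
  also have "\<dots> \<in> sets (Pi\<^sub>M I (\<lambda>_. borel :: 'b measure))"
    using assms(1) by (intro sets_PiM_I_finite) (simp_all add: borel_closed)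
  finally show ?thesis .
qed

lemma (in prob_space) mutual_info_bits_samples_xhat_le:
  fixes X :: "real \<Rightarrow> 'a \<Rightarrow> real^'n" and a :: "nat \<Rightarrow> 'a \<Rightarrow> bool list" and x :: real
  assumes [measurable]: "\<And>t. X t \<in> borel_measurable M"
    and a: "\<And>k. a k \<in> measurable M (count_space UNIV)"
    and "0 < x" and "(\<Sum>k<K. \<integral>\<^sup>+\<omega>. ennreal (length (a k \<omega>)) \<partial>M) \<le> ennreal (K * x)"
  shows "mutual_info_bits M (Pi\<^sub>M {..<K} (\<lambda>_. borel)) (Pi\<^sub>M {..<K} (\<lambda>_. borel))
      (\<lambda>\<omega>. \<lambda>k\<in>{..<K}. X (real k * tau) \<omega>) (\<lambda>\<omega>. \<lambda>k\<in>{..<K}. xhat M tau X a k \<omega>)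
    \<le> ennreal (K * theta x)"
proof (rule mutual_info_bits_le_expected_length[OF _ _ _ a _ assms(3,4)])
  have [measurable]: "xhat M tau X a k \<in> borel_measurable M" for k
    by (rule borel_measurable_xhat)
  show "(\<lambda>\<omega>. \<lambda>k\<in>{..<K}. X (real k * tau) \<omega>) \<in> measurable M (Pi\<^sub>M {..<K} (\<lambda>_. borel))"
    by measurable
  show "(\<lambda>\<omega>. \<lambda>k\<in>{..<K}. xhat M tau X a k \<omega>) \<in> measurable M (Pi\<^sub>M {..<K} (\<lambda>_. borel))"
    by measurable
  show "{y} \<in> sets (Pi\<^sub>M {..<K} (\<lambda>_. borel))" if "y \<in> space (Pi\<^sub>M {..<K} (\<lambda>_. borel))"
    for y :: "nat \<Rightarrow> real^'n"
    using finite_lessThan that by (rule singleton_sets_PiM)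
  show "(\<lambda>k\<in>{..<K}. xhat M tau X a k \<omega>) = (\<lambda>k\<in>{..<K}. xhat M tau X a k \<omega>')"
    if "\<omega> \<in> space M" "\<omega>' \<in> space M" "\<And>k. k < K \<Longrightarrow> a k \<omega> = a k \<omega>'" for \<omega> \<omega>'
  proof (rule restrict_ext)
    fix k assume "k \<in> {..<K}"
    with that show "xhat M tau X a k \<omega> = xhat M tau X a k \<omega>'"
      by (intro xhat_eq_if_codewords_eq) auto
  qed
qed

theorem lemma3:
  fixes M :: "'a measure"
    and A B Sigma0 :: "real^'n^'n"
    and w X :: "real \<Rightarrow> 'a \<Rightarrow> real^'n"
    and tau :: real
    and a :: "nat \<Rightarrow> 'a \<Rightarrow> bool list"
    and K :: nat
  assumes "prob_space M"
    and "hurwitz A"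
    and "pos_def_mat (B ** transpose B)"
    and "transpose Sigma0 = Sigma0" and "pos_def_mat Sigma0"
    and "lti_source M A B Sigma0 w X"
    and "tau > 0"
    and "causal_encoding M tau X a"
    and "K \<ge> 1"
  shows "(\<Sum>k<K. \<integral>\<^sup>+ \<omega>. ennreal (real (length (a k \<omega>))) \<partial>M) / ennreal (real K * tau)
       \<ge> theta_inv_ext
            (mutual_info_bits M (Pi\<^sub>M {..<K} (\<lambda>_. borel)) (Pi\<^sub>M {..<K} (\<lambda>_. borel))
               (\<lambda>\<omega>. \<lambda>k\<in>{..<K}. X (real k * tau) \<omega>)
               (\<lambda>\<omega>. \<lambda>k\<in>{..<K}. xhat M tau X a k \<omega>) / of_nat K) / ennreal tau"
proof -
  interpret prob_space M by fact
  have X: "\<And>t. X t \<in> borel_measurable M"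
    using assms(6) unfolding lti_source_def by blast
  have a: "\<And>k. a k \<in> measurable M (count_space UNIV)"
    using assms(8) unfolding causal_encoding_def by blast
  show ?thesis
    using assms(9,7) mutual_info_bits_samples_xhat_le[where X = X and a = a, OF X a]
    by (rule theta_inv_ext_div_le)
qed

end
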